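(* Under the hypotheses of the preceding theorem (weighted species $\mathcal{F}^\upsilon,\mathcal{G}^\gamma$ with $\mathcal{G}^\gamma(z)=\sum_ia_iz^i$ of radius of convergence $0$, $\mathcal{F}^\upsilon(z)$ of positive radius of convergence, $a_i=0$ unless $i\equiv1\pmod d$ for some $d\ge1$, $a_i>0$ for all $i\ge I$ with $i\equiv 1\pmod d$, and $\sum_{i_1+\dots+i_k=n,\ 1\le i_j<n-(k-1)}a_{i_1}\cdots a_{i_k}=o(a_{n-(k-1)})$ for every $k\ge2$), assume additionally that $[z^1]\mathcal{F}^\upsilon(z)>0$ and $a_1,a_2>0$. Then the random composite structure $\mathsf{S}_n$ drawn from $(\mathcal{F}^\upsilon\circ\mathcal{G}^\gamma)[[n]]$ with probability proportional to its weight consists of a single component with probability tending to $1$ as $n\to\infty$.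
   Context: A weighted species $\mathcal{F}^\upsilon$ assigns to each finite set $U$ a finite set $\mathcal{F}[U]$, functorial transport bijections, and relabelling-invariant weights $\upsilon\ge0$; $\mathcal{F}^\upsilon(z)=\sum_n|\mathcal{F}[n]|_\upsilon z^n/n!$ with $|\mathcal{F}[n]|_\upsilon$ the total weight of $\mathcal{F}[\{1,\dots,n\}]$. The composition $\mathcal{F}\circ\mathcal{G}$ (for $\mathcal{G}[\emptyset]=\emptyset$) has structures $(\pi,F,(G_Q)_{Q\in\pi})$ on $U$, with $\pi$ a partition of $U$ into non-empty blocks, $F\in\mathcal{F}[\pi]$, $G_Q\in\mathcal{G}[Q]$, weight $\upsilon(F)\prod_Q\gamma(G_Q)$; the $G_Q$ are its components. *)

theory Defs
  imports "HOL-Analysis.Analysis" "HOL-Library.Disjoint_Sets" "HOL-Library.FuncSet"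
    "HOL-Library.Landau_Symbols"
begin

text \<open>A weighted species with labels drawn from nat: S U is the finite set of structures
on a finite label set U, w U x the (nonnegative) weight of structure x in S U, and
T sigma U the transport of structures along a bijection sigma : U -> V.\<close>

definition weighted_species ::
  "(nat set \<Rightarrow> 'b set) \<Rightarrow> (nat set \<Rightarrow> 'b \<Rightarrow> real) \<Rightarrow> ((nat \<Rightarrow> nat) \<Rightarrow> nat set \<Rightarrow> 'b \<Rightarrow> 'b) \<Rightarrow> bool"
where
  "weighted_species S w T \<longleftrightarrow>
     (\<forall>U. finite U \<longrightarrow> finite (S U)) \<and>
     (\<forall>U x. finite U \<longrightarrow> x \<in> S U \<longrightarrow> 0 \<le> w U x) \<and>
     (\<forall>U V \<sigma>. finite U \<longrightarrow> bij_betw \<sigma> U V \<longrightarrow>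
         bij_betw (T \<sigma> U) (S U) (S V) \<and> (\<forall>x\<in>S U. w V (T \<sigma> U x) = w U x)) \<and>
     (\<forall>U \<sigma> \<sigma>' x. finite U \<longrightarrow> (\<forall>u\<in>U. \<sigma> u = \<sigma>' u) \<longrightarrow> x \<in> S U \<longrightarrow> T \<sigma> U x = T \<sigma>' U x) \<and>
     (\<forall>U x. finite U \<longrightarrow> x \<in> S U \<longrightarrow> T id U x = x) \<and>
     (\<forall>U V W \<sigma> \<tau> x. finite U \<longrightarrow> bij_betw \<sigma> U V \<longrightarrow> bij_betw \<tau> V W \<longrightarrow> x \<in> S U \<longrightarrow>
         T (\<tau> \<circ> \<sigma>) U x = T \<tau> V (T \<sigma> U x))"

definition total_weight :: "(nat set \<Rightarrow> 'b set) \<Rightarrow> (nat set \<Rightarrow> 'b \<Rightarrow> real) \<Rightarrow> nat \<Rightarrow> real" where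
  "total_weight S w n = (\<Sum>x\<in>S {1..n}. w {1..n} x)"

definition egf_coeff :: "(nat set \<Rightarrow> 'b set) \<Rightarrow> (nat set \<Rightarrow> 'b \<Rightarrow> real) \<Rightarrow> nat \<Rightarrow> real" where
  "egf_coeff S w n = total_weight S w n / fact n"

text \<open>Composite structures of F o G on [n]: a partition pi of [n] into nonempty blocks,
an F-structure on the set of blocks (identified with {1..|pi|}, blocks labelled in any fixed
way; relabelling invariance makes the choice irrelevant), and a G-structure on each block.\<close>
definition comp_structs ::
  "(nat set \<Rightarrow> 'b set) \<Rightarrow> (nat set \<Rightarrow> 'c set) \<Rightarrow> nat \<Rightarrow> (nat set set \<times> 'b \<times> (nat set \<Rightarrow> 'c)) set"
where
  "comp_structs SF SG n =
     {(\<pi>, f, g). partition_on {1..n} \<pi> \<and> f \<in> SF {1..card \<pi>} \<and> g \<in> (\<Pi>\<^sub>E Q\<in>\<pi>. SG Q)}"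

definition comp_weight ::
  "(nat set \<Rightarrow> 'b \<Rightarrow> real) \<Rightarrow> (nat set \<Rightarrow> 'c \<Rightarrow> real) \<Rightarrow> (nat set set \<times> 'b \<times> (nat set \<Rightarrow> 'c)) \<Rightarrow> real"
where
  "comp_weight wF wG s = (case s of (\<pi>, f, g) \<Rightarrow> wF {1..card \<pi>} f * (\<Prod>Q\<in>\<pi>. wG Q (g Q)))"

definition prob_single_component ::
  "(nat set \<Rightarrow> 'b set) \<Rightarrow> (nat set \<Rightarrow> 'b \<Rightarrow> real) \<Rightarrow> (nat set \<Rightarrow> 'c set) \<Rightarrow> (nat set \<Rightarrow> 'c \<Rightarrow> real) \<Rightarrow> nat \<Rightarrow> real"
where
  "prob_single_component SF wF SG wG n =
     (\<Sum>s\<in>{s\<in>comp_structs SF SG n. card (fst s) = 1}. comp_weight wF wG s)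
     / (\<Sum>s\<in>comp_structs SF SG n. comp_weight wF wG s)"

end

theory Submission
  imports Defs "HOL-Computational_Algebra.Formal_Power_Series"
begin

text \<open>
  By the composition formula, the composite structures on [n] with k components have total
  weight n! f_k [z^n] G(z)^k, where f_k and a_i are the coefficients of F and G; so the claim
  is that sum_{k>=2} f_k [z^n] G(z)^k = o(a_n). The case k = 2 of the growth hypothesis gives
  a_2 a_(n-1) <= sum_i a_i a_(n+1-i) = o(a_n), hence a_(n-1) / a_n -> 0. Every coefficient
  [z^n] G(z)^k is bounded by (a_1 + 1)^(k-1) b_(n+1-k) for a single majorant b, and b = O(a)
  by the same hypothesis. With |f_k| <= C r^(-k) the tail is then dominated by the geometric
  convolution sum_j Q^(n-j) b_j, which is o(a_n) because a_(n-1) / a_n -> 0.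
\<close>

definition kpartitions :: "'a set \<Rightarrow> nat \<Rightarrow> 'a set set set" where
  "kpartitions U k = {\<pi>. partition_on U \<pi> \<and> card \<pi> = k}"

definition partition_weight :: "(nat \<Rightarrow> real) \<Rightarrow> 'a set \<Rightarrow> nat \<Rightarrow> real" where
  "partition_weight t U k = (\<Sum>\<pi>\<in>kpartitions U k. \<Prod>Q\<in>\<pi>. t (card Q))"

lemma finite_kpartitions: "finite U \<Longrightarrow> finite (kpartitions U k)"
  unfolding kpartitions_def by (rule finite_subset[OF _ finitely_many_partition_on]) auto

lemma kpartitions_zero:
  assumes "finite U"
  shows "kpartitions U 0 = (if U = {} then {{}} else {})"
proof -
  have "partition_on U \<pi> \<and> card \<pi> = 0 \<longleftrightarrow> U = {} \<and> \<pi> = {}" for \<pi>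
    using finite_elements[OF assms] by (auto simp: partition_on_def partition_on_empty)
  then show ?thesis unfolding kpartitions_def by auto
qed

lemma kpartitions_empty_Suc: "kpartitions {} (Suc k) = {}"
  by (simp add: kpartitions_def partition_on_empty)

lemma new_block_disjnt:
  assumes "x \<notin> U" "partition_on (U - S) \<pi>"
  shows "insert x S \<notin> \<pi>" "disjnt (insert x S) (\<Union>\<pi>)"
  using assms partition_onD1[OF assms(2)] by (auto simp: disjnt_def)

lemma inj_on_insert_block:
  assumes "x \<notin> U"
  shows "inj_on (\<lambda>(S, \<pi>). insert (insert x S) \<pi>) (SIGMA S:Pow U. kpartitions (U - S) k)"
proof (rule inj_onI, clarify)
  fix S \<pi> S' \<pi>'
  assume "S \<subseteq> U" "\<pi> \<in> kpartitions (U - S) k" "S' \<subseteq> U" "\<pi>' \<in> kpartitions (U - S') k"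
    and eq: "insert (insert x S) \<pi> = insert (insert x S') \<pi>'"
  then have p: "partition_on (U - S) \<pi>" "partition_on (U - S') \<pi>'" and xS: "x \<notin> S" "x \<notin> S'"
    using assms by (auto simp: kpartitions_def)
  have "insert x S \<notin> \<pi>'" using partition_onD1[OF p(2)] assms by auto
  then have block: "insert x S = insert x S'" using eq by (metis insertCI insertE)
  then have "S = S'" using xS by (metis Diff_insert_absorb)
  moreover have "insert (insert x S) \<pi> = insert (insert x S) \<pi>'" using eq block by simp
  then have "\<pi> = \<pi>'"
    using new_block_disjnt(1)[OF assms p(1)] new_block_disjnt(1)[OF assms p(2)] block
    by (simp add: insert_ident)
  ultimately show "S = S' \<and> \<pi> = \<pi>'" by simp
qed

lemma insert_block_image:
  assumes "finite U" "x \<notin> U"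
  shows "(\<lambda>(S, \<pi>). insert (insert x S) \<pi>) ` (SIGMA S:Pow U. kpartitions (U - S) k)
    = kpartitions (insert x U) (Suc k)"
proof
  show "(\<lambda>(S, \<pi>). insert (insert x S) \<pi>) ` (SIGMA S:Pow U. kpartitions (U - S) k)
      \<subseteq> kpartitions (insert x U) (Suc k)"
  proof clarify
    fix S \<pi> assume S: "S \<subseteq> U" "\<pi> \<in> kpartitions (U - S) k"
    then have p: "partition_on (U - S) \<pi>" and c: "card \<pi> = k" by (auto simp: kpartitions_def)
    have "insert x U - insert x S = U - S" using assms(2) by auto
    then have "partition_on (insert x U) (insert (insert x S) \<pi>)"
      using partition_on_insert[OF new_block_disjnt(2)[OF assms(2) p]] p S(1) by auto
    moreover have "card (insert (insert x S) \<pi>) = Suc k"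
      using finite_elements[OF _ p] assms(1) c new_block_disjnt(1)[OF assms(2) p] by simp
    ultimately show "insert (insert x S) \<pi> \<in> kpartitions (insert x U) (Suc k)"
      by (simp add: kpartitions_def)
  qed
next
  show "kpartitions (insert x U) (Suc k)
      \<subseteq> (\<lambda>(S, \<pi>). insert (insert x S) \<pi>) ` (SIGMA S:Pow U. kpartitions (U - S) k)"
  proof
    fix \<pi> assume "\<pi> \<in> kpartitions (insert x U) (Suc k)"
    then have p: "partition_on (insert x U) \<pi>" and c: "card \<pi> = Suc k"
      by (auto simp: kpartitions_def)
    obtain B where B: "B \<in> \<pi>" "x \<in> B" using partition_onD1[OF p] by blast
    have "disjnt B (\<Union>(\<pi> - {B}))"
      using partition_onD2[OF p] B unfolding disjoint_def disjnt_def by blast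
    then have p': "partition_on (insert x U - B) (\<pi> - {B})" "B \<subseteq> insert x U"
      using partition_on_insert[of B "\<pi> - {B}"] p B by (auto simp: insert_absorb)
    have "insert x U - B = U - (B - {x})" using B assms(2) by auto
    moreover have "card (\<pi> - {B}) = k"
      using finite_elements[OF _ p] assms(1) c B by simp
    ultimately have "(B - {x}, \<pi> - {B}) \<in> (SIGMA S:Pow U. kpartitions (U - S) k)"
      using p' by (auto simp: kpartitions_def)
    moreover have "\<pi> = (\<lambda>(S, \<pi>). insert (insert x S) \<pi>) (B - {x}, \<pi> - {B})"
      using B by (simp add: insert_absorb insert_Diff)
    ultimately show "\<pi> \<in> (\<lambda>(S, \<pi>). insert (insert x S) \<pi>) ` (SIGMA S:Pow U. kpartitions (U - S) k)"
      by (rule rev_image_eqI)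
  qed
qed

lemma partition_weight_insert:
  assumes U: "finite U" and x: "x \<notin> U"
  shows "partition_weight t (insert x U) (Suc k) = (\<Sum>S\<in>Pow U. t (Suc (card S)) * partition_weight t (U - S) k)"
proof -
  have "partition_weight t (insert x U) (Suc k)
      = (\<Sum>(S, \<pi>)\<in>(SIGMA S:Pow U. kpartitions (U - S) k). \<Prod>Q\<in>insert (insert x S) \<pi>. t (card Q))"
    unfolding partition_weight_def insert_block_image[OF assms, symmetric]
    by (subst sum.reindex[OF inj_on_insert_block[OF x]]) (simp add: case_prod_unfold)
  also have "\<dots> = (\<Sum>S\<in>Pow U. \<Sum>\<pi>\<in>kpartitions (U - S) k. \<Prod>Q\<in>insert (insert x S) \<pi>. t (card Q))"
    by (rule sum.Sigma[symmetric]) (auto simp: U finite_kpartitions)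
  also have "\<dots> = (\<Sum>S\<in>Pow U. \<Sum>\<pi>\<in>kpartitions (U - S) k. t (Suc (card S)) * (\<Prod>Q\<in>\<pi>. t (card Q)))"
  proof (intro sum.cong refl)
    fix S \<pi> assume S: "S \<in> Pow U" and "\<pi> \<in> kpartitions (U - S) k"
    then have p: "partition_on (U - S) \<pi>" by (simp add: kpartitions_def)
    have "card (insert x S) = Suc (card S)" using S x U by (meson PowD card_insert_disjoint finite_subset subsetD)
    then show "(\<Prod>Q\<in>insert (insert x S) \<pi>. t (card Q)) = t (Suc (card S)) * (\<Prod>Q\<in>\<pi>. t (card Q))"
      using new_block_disjnt(1)[OF x p] finite_elements[OF _ p] U by simp
  qed
  finally show ?thesis by (simp add: partition_weight_def sum_distrib_left)
qed

lemma sum_Pow_card: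
  fixes \<phi> :: "nat \<Rightarrow> real"
  assumes "finite U"
  shows "(\<Sum>S\<in>Pow U. \<phi> (card S)) = (\<Sum>i\<le>card U. of_nat (card U choose i) * \<phi> i)"
proof -
  have "(\<Sum>S\<in>Pow U. \<phi> (card S)) = (\<Sum>i\<le>card U. \<Sum>S\<in>{S\<in>Pow U. card S = i}. \<phi> (card S))"
    by (rule sum.group[symmetric]) (auto simp: assms card_mono)
  also have "\<dots> = (\<Sum>i\<le>card U. of_nat (card U choose i) * \<phi> i)"
  proof (rule sum.cong[OF refl])
    fix i
    have "card {S\<in>Pow U. card S = i} = card U choose i"
      using n_subsets[OF assms] by (simp add: Collect_conj_eq Pow_def)
    then show "(\<Sum>S\<in>{S\<in>Pow U. card S = i}. \<phi> (card S)) = of_nat (card U choose i) * \<phi> i"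
      by simp
  qed
  finally show ?thesis .
qed

text \<open>Coefficient of z^m in (A^(j+1))' = (j+1) A' A^j, in exponential normalisation.\<close>
lemma fact_fps_power_Suc_nth:
  fixes A :: "real fps"
  shows "fact (Suc m) * fps_nth (A ^ Suc j) (Suc m) = of_nat (Suc j) *
    (\<Sum>i\<le>m. of_nat (m choose i) * (fact (Suc i) * fps_nth A (Suc i)) * (fact (m - i) * fps_nth (A ^ j) (m - i)))"
proof -
  have "fps_nth (fps_deriv (A ^ Suc j)) m = fps_nth (fps_const (of_nat (Suc j)) * (fps_deriv A * A ^ j)) m"
    by (subst fps_deriv_power) (simp add: mult.assoc)
  also have "\<dots> = of_nat (Suc j) * (\<Sum>i=0..m. fps_nth (fps_deriv A) i * fps_nth (A ^ j) (m - i))"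
    by (subst fps_mult_left_const_nth) (simp only: fps_mult_nth)
  finally have deriv: "of_nat (Suc m) * fps_nth (A ^ Suc j) (Suc m)
      = of_nat (Suc j) * (\<Sum>i\<le>m. (of_nat (Suc i) * fps_nth A (Suc i)) * fps_nth (A ^ j) (m - i))"
    by (simp only: fps_deriv_nth atLeast0AtMost Suc_eq_plus1)
  have summand: "of_nat (m choose i) * (fact (Suc i) * fps_nth A (Suc i)) * (fact (m - i) * fps_nth (A ^ j) (m - i))
      = fact m * ((of_nat (Suc i) * fps_nth A (Suc i)) * fps_nth (A ^ j) (m - i))" if "i \<le> m" for i
  proof -
    have f: "fact i * fact (m - i) * real (m choose i) = fact m"
      using binomial_fact_lemma[OF that] by (metis of_nat_fact of_nat_mult)
    have "of_nat (m choose i) * (fact (Suc i) * fps_nth A (Suc i)) * (fact (m - i) * fps_nth (A ^ j) (m - i))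
        = (fact i * fact (m - i) * real (m choose i)) * ((of_nat (Suc i) * fps_nth A (Suc i)) * fps_nth (A ^ j) (m - i))"
      by (simp add: fact_Suc mult_ac)
    also have "\<dots> = fact m * ((of_nat (Suc i) * fps_nth A (Suc i)) * fps_nth (A ^ j) (m - i))"
      using f by (simp add: mult_ac)
    finally show ?thesis .
  qed
  have "fact (Suc m) * fps_nth (A ^ Suc j) (Suc m) = fact m * (of_nat (Suc m) * fps_nth (A ^ Suc j) (Suc m))"
    by (simp add: fact_Suc mult_ac)
  also have "\<dots> = of_nat (Suc j) * (\<Sum>i\<le>m. fact m * ((of_nat (Suc i) * fps_nth A (Suc i)) * fps_nth (A ^ j) (m - i)))"
    by (subst deriv) (simp add: sum_distrib_left mult_ac)
  also have "\<dots> = of_nat (Suc j) *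
      (\<Sum>i\<le>m. of_nat (m choose i) * (fact (Suc i) * fps_nth A (Suc i)) * (fact (m - i) * fps_nth (A ^ j) (m - i)))"
    by (intro arg_cong[where f = "\<lambda>x. of_nat (Suc j) * x"] sum.cong refl) (simp only: atMost_iff summand)
  finally show ?thesis .
qed

lemma partition_weight_eq_fps_power_nth:
  fixes a :: "nat \<Rightarrow> real"
  assumes "finite U" and a0: "a 0 = 0" and t: "\<And>j. t j = fact j * a j"
  shows "partition_weight t U k * fact k = fact (card U) * fps_nth (Abs_fps a ^ k) (card U)"
  using assms(1)
proof (induction "card U" arbitrary: U k rule: less_induct)
  case less
  let ?A = "Abs_fps a"
  show ?case
  proof (cases "U = {}")
    case True
    with a0 show ?thesis
      by (cases k) (simp_all add: partition_weight_def kpartitions_zero kpartitions_empty_Suc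
          fps_nth_power_0 del: power_Suc)
  next
    case False
    then obtain x where "x \<in> U" by blast
    define U' where "U' = U - {x}"
    have U: "U = insert x U'" "x \<notin> U'" and fin: "finite U'"
      using \<open>x \<in> U\<close> less.prems by (auto simp: U'_def)
    define m where "m = card U'"
    have cU: "card U = Suc m" using U fin m_def by simp
    show ?thesis
    proof (cases k)
      case 0
      then show ?thesis using False less.prems cU by (simp add: partition_weight_def kpartitions_zero)
    next
      case (Suc j)
      have IH: "partition_weight t (U' - S) j * fact j = fact (m - card S) * fps_nth (?A ^ j) (m - card S)"
        if "S \<subseteq> U'" for S
        using less.hyps[of "U' - S" j] that fin cU card_mono[OF fin, of "U' - S"]
        by (simp add: card_Diff_subset finite_subset m_def)
      have "partition_weight t U k * fact k
          = of_nat (Suc j) * (\<Sum>S\<in>Pow U'. t (Suc (card S)) * (partition_weight t (U' - S) j * fact j))"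
        using partition_weight_insert[OF fin U(2)] U(1) Suc
        by (simp add: fact_Suc sum_distrib_left sum_distrib_right mult_ac)
      also have "\<dots> = of_nat (Suc j) *
          (\<Sum>S\<in>Pow U'. t (Suc (card S)) * (fact (m - card S) * fps_nth (?A ^ j) (m - card S)))"
        using IH by (auto intro!: sum.cong)
      also have "\<dots> = of_nat (Suc j) *
          (\<Sum>i\<le>m. of_nat (m choose i) * (t (Suc i) * (fact (m - i) * fps_nth (?A ^ j) (m - i))))"
        using sum_Pow_card[OF fin, of "\<lambda>i. t (Suc i) * (fact (m - i) * fps_nth (?A ^ j) (m - i))"]
        by (simp add: m_def)
      also have "\<dots> = fact (card U) * fps_nth (?A ^ k) (card U)"
        using fact_fps_power_Suc_nth[of m ?A j] cU Suc by (simp add: t mult_ac)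
      finally show ?thesis .
    qed
  qed
qed

lemma weighted_species_finite: "weighted_species S w T \<Longrightarrow> finite U \<Longrightarrow> finite (S U)"
  unfolding weighted_species_def by (elim conjE) simp

lemma weighted_species_nonneg: "weighted_species S w T \<Longrightarrow> finite U \<Longrightarrow> x \<in> S U \<Longrightarrow> 0 \<le> w U x"
  unfolding weighted_species_def by (elim conjE) simp

lemma egf_coeff_nonneg: "weighted_species S w T \<Longrightarrow> 0 \<le> egf_coeff S w n"
  unfolding egf_coeff_def total_weight_def
  by (intro divide_nonneg_pos sum_nonneg) (auto dest: weighted_species_nonneg)

lemma weighted_species_sum_weight:
  assumes S: "weighted_species S w T" and Q: "finite Q"
  shows "(\<Sum>x\<in>S Q. w Q x) = total_weight S w (card Q)"
proof -
  obtain \<sigma> where \<sigma>: "bij_betw \<sigma> Q {1..card Q}"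
    using finite_same_card_bij[OF Q, of "{1..card Q}"] by auto
  have "\<forall>U V \<sigma>. finite U \<longrightarrow> bij_betw \<sigma> U V \<longrightarrow>
      bij_betw (T \<sigma> U) (S U) (S V) \<and> (\<forall>x\<in>S U. w V (T \<sigma> U x) = w U x)"
    using S unfolding weighted_species_def by (elim conjE)
  then have b: "bij_betw (T \<sigma> Q) (S Q) (S {1..card Q})" and w: "\<forall>x\<in>S Q. w {1..card Q} (T \<sigma> Q x) = w Q x"
    using Q \<sigma> by blast+
  have "total_weight S w (card Q) = (\<Sum>x\<in>S Q. w {1..card Q} (T \<sigma> Q x))"
    unfolding total_weight_def by (rule sum.reindex_bij_betw[OF b, symmetric])
  with w show ?thesis by simp
qed

lemma comp_structs_Sigma:
  "comp_structs SF SG n = (SIGMA \<pi>:{\<pi>. partition_on {1..n} \<pi>}. SF {1..card \<pi>} \<times> PiE \<pi> SG)"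
  unfolding comp_structs_def by auto

lemma finite_comp_structs:
  assumes "weighted_species SF wF TF" "weighted_species SG wG TG"
  shows "finite (comp_structs SF SG n)"
  unfolding comp_structs_Sigma
proof (intro finite_SigmaI finitely_many_partition_on finite_cartesian_product finite_PiE)
  fix \<pi> Q assume "\<pi> \<in> {\<pi>. partition_on {1..n} \<pi>}" "Q \<in> \<pi>"
  then have "Q \<subseteq> {1..n}" using partition_onD1 by blast
  then show "finite (SG Q)" using weighted_species_finite[OF assms(2)] finite_subset by blast
qed (use finite_elements weighted_species_finite[OF assms(1)] in auto)

lemma comp_weight_sum_card:
  assumes F: "weighted_species SF wF TF" and G: "weighted_species SG wG TG"
  shows "(\<Sum>s\<in>{s\<in>comp_structs SF SG n. card (fst s) = k}. comp_weight wF wG s)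
     = total_weight SF wF k * partition_weight (total_weight SG wG) {1..n} k"
proof -
  have blocks: "finite \<pi>" "\<And>Q. Q \<in> \<pi> \<Longrightarrow> finite Q" if "\<pi> \<in> kpartitions {1..n} k" for \<pi>
  proof -
    have p: "partition_on {1..n} \<pi>" using that by (simp add: kpartitions_def)
    show "finite \<pi>" using finite_elements[OF _ p] by simp
    show "finite Q" if "Q \<in> \<pi>" for Q
    proof (rule finite_subset)
      show "Q \<subseteq> {1..n}" using partition_onD1[OF p] that by blast
    qed simp
  qed
  have "{s\<in>comp_structs SF SG n. card (fst s) = k}
      = (SIGMA \<pi>:kpartitions {1..n} k. SF {1..card \<pi>} \<times> PiE \<pi> SG)"
    unfolding comp_structs_Sigma kpartitions_def by (auto simp del: PiE_iff)
  then have "(\<Sum>s\<in>{s\<in>comp_structs SF SG n. card (fst s) = k}. comp_weight wF wG s)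
      = (\<Sum>\<pi>\<in>kpartitions {1..n} k. \<Sum>p\<in>SF {1..card \<pi>} \<times> PiE \<pi> SG. comp_weight wF wG (\<pi>, p))"
    using sum.Sigma[of "kpartitions {1..n} k" "\<lambda>\<pi>. SF {1..card \<pi>} \<times> PiE \<pi> SG"
        "\<lambda>\<pi> p. comp_weight wF wG (\<pi>, p)"] blocks
      weighted_species_finite[OF F] weighted_species_finite[OF G]
    by (simp add: finite_kpartitions finite_PiE case_prod_eta)
  also have "\<dots> = (\<Sum>\<pi>\<in>kpartitions {1..n} k. total_weight SF wF k * (\<Prod>Q\<in>\<pi>. total_weight SG wG (card Q)))"
  proof (rule sum.cong[OF refl])
    fix \<pi> assume \<pi>: "\<pi> \<in> kpartitions {1..n} k"
    then have "card \<pi> = k" by (simp add: kpartitions_def)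
    then have "(\<Sum>p\<in>SF {1..card \<pi>} \<times> PiE \<pi> SG. comp_weight wF wG (\<pi>, p))
        = (\<Sum>f\<in>SF {1..k}. wF {1..k} f) * (\<Sum>g\<in>PiE \<pi> SG. \<Prod>Q\<in>\<pi>. wG Q (g Q))"
      unfolding comp_weight_def by (simp add: sum.cartesian_product[symmetric] sum_product)
    also have "(\<Sum>g\<in>PiE \<pi> SG. \<Prod>Q\<in>\<pi>. wG Q (g Q)) = (\<Prod>Q\<in>\<pi>. \<Sum>x\<in>SG Q. wG Q x)"
      using blocks[OF \<pi>] weighted_species_finite[OF G] by (simp add: prod_sum_PiE)
    also have "\<dots> = (\<Prod>Q\<in>\<pi>. total_weight SG wG (card Q))"
      using weighted_species_sum_weight[OF G] blocks(2)[OF \<pi>] by (simp cong: prod.cong)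
    finally show "(\<Sum>p\<in>SF {1..card \<pi>} \<times> PiE \<pi> SG. comp_weight wF wG (\<pi>, p))
        = total_weight SF wF k * (\<Prod>Q\<in>\<pi>. total_weight SG wG (card Q))"
      by (simp add: total_weight_def)
  qed
  also have "\<dots> = total_weight SF wF k * partition_weight (total_weight SG wG) {1..n} k"
    by (simp add: partition_weight_def sum_distrib_left)
  finally show ?thesis .
qed

lemma card_partition_on_le:
  assumes "partition_on A P" "finite A"
  shows "card P \<le> card A"
proof -
  have "card A = (\<Sum>p\<in>P. card p)"
    using product_partition[OF assms(1)] partition_onD1[OF assms(1)] assms(2)
    by (metis Union_upper finite_subset)
  also have "\<dots> \<ge> (\<Sum>p\<in>P. 1)"
    using partition_onD1[OF assms(1)] partition_onD3[OF assms(1)] assms(2)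
    by (intro sum_mono) (metis One_nat_def Suc_leI Union_upper card_gt_0_iff finite_subset)
  finally show ?thesis by simp
qed

lemma comp_weight_sum_by_card:
  assumes "weighted_species SF wF TF" "weighted_species SG wG TG"
  shows "(\<Sum>s\<in>comp_structs SF SG n. comp_weight wF wG s)
     = (\<Sum>k\<le>n. \<Sum>s\<in>{s\<in>comp_structs SF SG n. card (fst s) = k}. comp_weight wF wG s)"
  by (rule sum.group[symmetric, OF finite_comp_structs[OF assms] finite_atMost])
    (auto simp: comp_structs_def intro: card_partition_on_le[of "{1..n}", simplified])

lemma comp_weight_sum_card_eq_fps:
  assumes F: "weighted_species SF wF TF" and G: "weighted_species SG wG TG" and "SG {} = {}"
  shows "(\<Sum>s\<in>{s\<in>comp_structs SF SG n. card (fst s) = k}. comp_weight wF wG s)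
     = fact n * (egf_coeff SF wF k * fps_nth (Abs_fps (egf_coeff SG wG) ^ k) n)"
proof -
  have "egf_coeff SG wG 0 = 0" using \<open>SG {} = {}\<close> by (simp add: egf_coeff_def total_weight_def)
  then have "partition_weight (total_weight SG wG) {1..n} k * fact k
      = fact n * fps_nth (Abs_fps (egf_coeff SG wG) ^ k) n"
    using partition_weight_eq_fps_power_nth[of "{1..n}"] by (simp add: egf_coeff_def)
  then show ?thesis
    unfolding comp_weight_sum_card[OF F G] by (simp add: egf_coeff_def field_simps)
qed

lemma prob_single_component_eq:
  fixes SF :: "nat set \<Rightarrow> 'b set" and wF :: "nat set \<Rightarrow> 'b \<Rightarrow> real"
    and SG :: "nat set \<Rightarrow> 'c set" and wG :: "nat set \<Rightarrow> 'c \<Rightarrow> real"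
  defines "f \<equiv> egf_coeff SF wF" and "A \<equiv> Abs_fps (egf_coeff SG wG)"
  assumes F: "weighted_species SF wF TF" and G: "weighted_species SG wG TG" and "SG {} = {}"
    and "1 \<le> n"
  shows "prob_single_component SF wF SG wG n
    = f 1 * fps_nth A n / (f 1 * fps_nth A n + (\<Sum>k\<in>{2..n}. f k * fps_nth (A ^ k) n))"
proof -
  have "{..n} = insert 0 (insert 1 {2..n})" using \<open>1 \<le> n\<close> by auto
  then have "(\<Sum>k\<le>n. f k * fps_nth (A ^ k) n) = f 1 * fps_nth A n + (\<Sum>k\<in>{2..n}. f k * fps_nth (A ^ k) n)"
    using \<open>1 \<le> n\<close> by simp
  then show ?thesis
    unfolding prob_single_component_def comp_weight_sum_by_card[OF F G]
      comp_weight_sum_card_eq_fps[OF F G \<open>SG {} = {}\<close>] f_def[symmetric] A_def[symmetric]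
    by (simp add: sum_distrib_left[symmetric])
qed

lemma fps_nth_power_Suc_Abs_fps:
  "fps_nth (Abs_fps a ^ Suc k) n = (\<Sum>i\<le>n. a i * fps_nth (Abs_fps a ^ k) (n - i))"
  by (simp add: fps_mult_nth atLeast0AtMost)

lemma fps_nth_power_nonneg:
  fixes a :: "nat \<Rightarrow> real"
  assumes "\<And>i. 0 \<le> a i"
  shows "0 \<le> fps_nth (Abs_fps a ^ k) n"
  using assms by (induction k arbitrary: n) (simp_all add: fps_nth_power_Suc_Abs_fps sum_nonneg del: power_Suc)

lemma fps_nth_power_below:
  fixes a :: "nat \<Rightarrow> real"
  assumes "a 0 = 0" "n < k"
  shows "fps_nth (Abs_fps a ^ k) n = 0"
  using assms(2)
proof (induction k arbitrary: n)
  case (Suc k)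
  have "a i * fps_nth (Abs_fps a ^ k) (n - i) = 0" if "i \<le> n" for i
    using Suc that assms(1) by (cases i) auto
  then show ?case unfolding fps_nth_power_Suc_Abs_fps by (blast intro: sum.neutral)
qed simp

text \<open>The majorant b_m = a_m + sum_{i>=2} a_i b_{m+1-i} absorbs all products a_{i_1} ... a_{i_k}
  with i_1 + ... + i_k = n: a factor a_1 costs the constant a_1 + 1, any other factor a_i
  consumes i - 1 of the index.\<close>
function conv_majorant :: "(nat \<Rightarrow> real) \<Rightarrow> nat \<Rightarrow> real" where
  "conv_majorant a m = (if m = 0 then 0 else a m + (\<Sum>i\<in>{2..m}. a i * conv_majorant a (m + 1 - i)))"
  by auto
termination by (relation "Wellfounded.measure snd") auto

declare conv_majorant.simps [simp del]

lemma conv_majorant_0 [simp]: "conv_majorant a 0 = 0"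
  by (simp add: conv_majorant.simps)

lemma conv_majorant_nonneg:
  assumes "\<And>i. 0 \<le> a i"
  shows "0 \<le> conv_majorant a m"
proof (induction m rule: less_induct)
  case (less m)
  then show ?case
    using assms by (subst conv_majorant.simps[of a m]) (auto intro!: add_nonneg_nonneg sum_nonneg)
qed

lemma conv_majorant_ge:
  assumes "a 0 = 0" "\<And>i. 0 \<le> a i"
  shows "a m \<le> conv_majorant a m"
  using assms conv_majorant_nonneg[of a]
  by (subst conv_majorant.simps[of a m]) (auto intro!: sum_nonneg)

lemma conv_majorant_convolution_le:
  assumes a0: "a 0 = 0" and nn: "\<And>i. 0 \<le> a i" and "m < n"
  shows "(\<Sum>i\<le>n. a i * conv_majorant a (m + 1 - i)) \<le> (a 1 + 1) * conv_majorant a m"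
proof (cases "m = 0")
  case True
  then have "a i * conv_majorant a (m + 1 - i) = 0" for i
    using a0 by (cases i) auto
  then have "(\<Sum>i\<le>n. a i * conv_majorant a (m + 1 - i)) = 0" by (blast intro: sum.neutral)
  then show ?thesis using True by simp
next
  case False
  have "(\<Sum>i\<le>n. a i * conv_majorant a (m + 1 - i)) = (\<Sum>i\<in>{1..m}. a i * conv_majorant a (m + 1 - i))"
    using \<open>m < n\<close> a0 by (intro sum.mono_neutral_right) (auto simp: not_le)
  also have "\<dots> = a 1 * conv_majorant a m + (\<Sum>i\<in>{2..m}. a i * conv_majorant a (m + 1 - i))"
    using False by (subst sum.atLeast_Suc_atMost) (auto simp: numeral_2_eq_2)
  also have "\<dots> \<le> a 1 * conv_majorant a m + conv_majorant a m"
    using False nn[of m] by (simp add: conv_majorant.simps[of a m])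
  finally show ?thesis by (simp add: algebra_simps)
qed

lemma fps_nth_power_le_majorant:
  assumes a0: "a 0 = 0" and nn: "\<And>i. 0 \<le> a i" and "1 \<le> k"
  shows "fps_nth (Abs_fps a ^ k) n \<le> (a 1 + 1) ^ (k - 1) * conv_majorant a (n + 1 - k)"
  using \<open>1 \<le> k\<close>
proof (induction k arbitrary: n rule: dec_induct)
  case base
  then show ?case using conv_majorant_ge[of a, OF a0 nn] by simp
next
  case (step k)
  let ?D = "a 1 + 1"
  have D: "0 \<le> ?D" using nn[of 1] by simp
  show ?case
  proof (cases "n \<le> k")
    case True
    then show ?thesis
      using fps_nth_power_below[of a, OF a0, of n "Suc k"] conv_majorant_nonneg[of a, OF nn] D by simp
  next
    case False
    define m where "m = n - k"
    have "fps_nth (Abs_fps a ^ Suc k) n \<le> (\<Sum>i\<le>n. a i * (?D ^ (k - 1) * conv_majorant a (m + 1 - i)))"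
      unfolding fps_nth_power_Suc_Abs_fps
    proof (intro sum_mono mult_left_mono)
      fix i assume "i \<in> {..n}"
      then have "n - i + 1 - k = m + 1 - i" using False m_def by auto
      then show "fps_nth (Abs_fps a ^ k) (n - i) \<le> ?D ^ (k - 1) * conv_majorant a (m + 1 - i)"
        using step.IH[of "n - i"] by simp
    qed (use nn in auto)
    also have "\<dots> = ?D ^ (k - 1) * (\<Sum>i\<le>n. a i * conv_majorant a (m + 1 - i))"
      by (simp add: sum_distrib_left mult_ac)
    also have "\<dots> \<le> ?D ^ (k - 1) * (?D * conv_majorant a m)"
      using conv_majorant_convolution_le[of a, OF a0 nn, of m n] False step.hyps D m_def
      by (intro mult_left_mono) auto
    also have "\<dots> = ?D ^ (Suc k - 1) * conv_majorant a (n + 1 - Suc k)"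
      using m_def step.hyps False by (cases k) (auto simp: mult_ac)
    finally show ?thesis .
  qed
qed

text \<open>Induction step for b_m = O(a_m): in sum_{i>=2} a_i b_{m+1-i}, the terms with m + 1 - i < J
  are controlled by monotonicity of a, the others by the induction hypothesis and the
  smallness of the pair sums.\<close>
lemma conv_majorant_le_step:
  fixes a :: "nat \<Rightarrow> real"
  assumes nn: "\<And>i. 0 \<le> a i" and J: "2 \<le> J" "2 * J \<le> m"
    and mono: "\<And>i. J \<le> i \<Longrightarrow> i \<le> m \<Longrightarrow> a i \<le> a m"
    and pairs: "(\<Sum>i\<in>{2..m-1}. a i * a (m + 1 - i)) \<le> a m / 2"
    and IH: "\<And>j. J \<le> j \<Longrightarrow> j < m \<Longrightarrow> conv_majorant a j \<le> E * a j" and "0 \<le> E"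
  shows "conv_majorant a m \<le> (1 + (\<Sum>j<J. conv_majorant a j) + E / 2) * a m"
proof -
  let ?b = "conv_majorant a"
  define L where "L = {i\<in>{2..m}. m + 1 - i < J}"
  define R where "R = {i\<in>{2..m}. J \<le> m + 1 - i}"
  have bnn: "0 \<le> ?b j" for j using conv_majorant_nonneg[of a, OF nn] .
  have "(\<Sum>i\<in>L. a i * ?b (m + 1 - i)) \<le> (\<Sum>i\<in>L. a m * ?b (m + 1 - i))"
    using mono J bnn by (intro sum_mono mult_right_mono) (auto simp: L_def)
  also have "\<dots> = a m * (\<Sum>j\<in>(\<lambda>i. m + 1 - i) ` L. ?b j)"
    by (subst sum.reindex) (auto simp: inj_on_def L_def sum_distrib_left)
  also have "\<dots> \<le> a m * (\<Sum>j<J. ?b j)"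
    using bnn J nn[of m] by (intro mult_left_mono sum_mono2) (auto simp: L_def)
  finally have left: "(\<Sum>i\<in>L. a i * ?b (m + 1 - i)) \<le> a m * (\<Sum>j<J. ?b j)" .
  have "a i * ?b (m + 1 - i) \<le> E * (a i * a (m + 1 - i))" if "i \<in> R" for i
  proof -
    have "?b (m + 1 - i) \<le> E * a (m + 1 - i)" using that J by (intro IH) (auto simp: R_def)
    then have "a i * ?b (m + 1 - i) \<le> a i * (E * a (m + 1 - i))" using nn[of i] by (rule mult_left_mono)
    then show ?thesis by (simp add: mult.left_commute)
  qed
  then have "(\<Sum>i\<in>R. a i * ?b (m + 1 - i)) \<le> (\<Sum>i\<in>R. E * (a i * a (m + 1 - i)))"
    by (rule sum_mono)
  also have "\<dots> \<le> E * (\<Sum>i\<in>{2..m-1}. a i * a (m + 1 - i))"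
    using J nn \<open>0 \<le> E\<close> by (auto simp: sum_distrib_left R_def intro!: sum_mono2)
  also have "\<dots> \<le> E * (a m / 2)" using pairs \<open>0 \<le> E\<close> by (rule mult_left_mono)
  finally have right: "(\<Sum>i\<in>R. a i * ?b (m + 1 - i)) \<le> E * (a m / 2)" .
  have "?b m = a m + (\<Sum>i\<in>{2..m}. a i * ?b (m + 1 - i))"
    using J by (subst conv_majorant.simps[of a m]) simp
  also have "{2..m} = L \<union> R" by (auto simp: L_def R_def)
  also have "(\<Sum>i\<in>L \<union> R. a i * ?b (m + 1 - i)) = (\<Sum>i\<in>L. a i * ?b (m + 1 - i)) + (\<Sum>i\<in>R. a i * ?b (m + 1 - i))"
    by (rule sum.union_disjoint) (auto simp: L_def R_def)
  finally show ?thesis using left right by (simp add: algebra_simps)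
qed

lemma conv_majorant_le_const_mult:
  fixes a :: "nat \<Rightarrow> real"
  assumes nn: "\<And>i. 0 \<le> a i" and J: "2 \<le> J"
    and pos: "\<And>m. J \<le> m \<Longrightarrow> 0 < a m" and mono: "\<And>m. J \<le> m \<Longrightarrow> a m \<le> a (Suc m)"
    and pairs: "\<And>m. J \<le> m \<Longrightarrow> (\<Sum>i\<in>{2..m-1}. a i * a (m + 1 - i)) \<le> a m / 2"
  obtains E where "\<And>m. J \<le> m \<Longrightarrow> conv_majorant a m \<le> E * a m"
proof -
  let ?b = "conv_majorant a"
  define E0 where "E0 = (\<Sum>j<J. ?b j)"
  define E where "E = 2 * (1 + E0) + (\<Sum>m\<in>{J..2*J}. ?b m / a m)"
  have bnn: "0 \<le> ?b j" for j using conv_majorant_nonneg[of a, OF nn] .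
  have "0 \<le> E0" unfolding E0_def using bnn by (simp add: sum_nonneg)
  moreover have "0 \<le> (\<Sum>m\<in>{J..2*J}. ?b m / a m)"
    using bnn pos by (intro sum_nonneg divide_nonneg_pos) auto
  ultimately have E0E: "0 \<le> E0" "2 * (1 + E0) \<le> E" by (simp_all add: E_def)
  have "?b m \<le> E * a m" if "J \<le> m" for m
    using that
  proof (induction m rule: less_induct)
    case (less m)
    show ?case
    proof (cases "m \<le> 2 * J")
      case True
      have "?b m / a m \<le> (\<Sum>m\<in>{J..2*J}. ?b m / a m)"
        using True less.prems bnn pos by (intro member_le_sum divide_nonneg_pos) auto
      also have "\<dots> \<le> E" using E0E by (simp add: E_def)
      finally show ?thesis using pos[OF less.prems] by (simp add: divide_le_eq)
    next
      case False
      have "a i \<le> a m" if "J \<le> i" "i \<le> m" for i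
        by (rule lift_Suc_mono_le_ivl[where N = "{J..}"]) (use mono that in auto)
      then have "?b m \<le> (1 + E0 + E / 2) * a m"
        unfolding E0_def using nn J False pairs less E0E
        by (intro conv_majorant_le_step) auto
      also have "\<dots> \<le> E * a m" using E0E pos[OF less.prems] by (intro mult_right_mono) auto
      finally show ?thesis .
    qed
  qed
  then show thesis by (rule that)
qed

lemma LIMSEQ_zero_of_recursive_bound:
  fixes v c :: "nat \<Rightarrow> real"
  assumes c: "c \<longlonglongrightarrow> 0" "\<And>n. N \<le> n \<Longrightarrow> 0 \<le> c n" and v: "\<And>n. N \<le> n \<Longrightarrow> 0 \<le> v n"
    and rec: "\<And>n. N \<le> n \<Longrightarrow> v (Suc n) \<le> c n * (v n + E)" and "0 \<le> E"
  shows "v \<longlonglongrightarrow> 0"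
proof -
  obtain N0 where N0: "\<And>n. N0 \<le> n \<Longrightarrow> c n < 1/2"
    using order_tendstoD(2)[OF c(1), of "1/2"] by (auto simp: eventually_sequentially)
  define N1 where "N1 = max N N0"
  define B where "B = v N1 + E"
  have bound: "v n \<le> B" if "N1 \<le> n" for n
    using that
  proof (induction n rule: dec_induct)
    case (step n)
    then have "N \<le> n" "N0 \<le> n" by (auto simp: N1_def)
    then have cn: "0 \<le> c n" "c n \<le> 1/2" and "0 \<le> v n" using N0[of n] c(2)[of n] v[of n] by simp_all
    have "v (Suc n) \<le> c n * (v n + E)" using rec \<open>N \<le> n\<close> by simp
    also have "\<dots> \<le> (1/2) * (B + E)"
      using cn \<open>0 \<le> v n\<close> step.IH \<open>0 \<le> E\<close> by (intro mult_mono) auto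
    also have "\<dots> \<le> B" using v[of N1] N1_def B_def by simp
    finally show ?case .
  qed (use \<open>0 \<le> E\<close> B_def in simp)
  have "(\<lambda>n. v (Suc n)) \<longlonglongrightarrow> 0"
  proof (rule tendsto_sandwich[OF _ _ tendsto_const])
    show "\<forall>\<^sub>F n in sequentially. 0 \<le> v (Suc n)"
      using v by (auto simp: eventually_sequentially intro: exI[of _ N])
    show "\<forall>\<^sub>F n in sequentially. v (Suc n) \<le> c n * (B + E)"
      unfolding eventually_sequentially
    proof (intro exI[of _ N1] allI impI)
      fix n assume "N1 \<le> n"
      then have "v (Suc n) \<le> c n * (v n + E)" "0 \<le> c n" using rec c(2) by (simp_all add: N1_def)
      moreover have "c n * (v n + E) \<le> c n * (B + E)"
        using bound[OF \<open>N1 \<le> n\<close>] \<open>0 \<le> c n\<close> by (intro mult_left_mono) simp_all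
      ultimately show "v (Suc n) \<le> c n * (B + E)" by linarith
    qed
    show "(\<lambda>n. c n * (B + E)) \<longlonglongrightarrow> 0"
      using tendsto_mult_left_zero[OF c(1)] by simp
  qed
  then show ?thesis by (rule LIMSEQ_imp_Suc)
qed

lemma geometric_convolution_negligible:
  fixes a b :: "nat \<Rightarrow> real"
  assumes "0 \<le> Q" and ratio: "(\<lambda>n. a n / a (Suc n)) \<longlonglongrightarrow> 0"
    and pos: "\<And>n. J \<le> n \<Longrightarrow> 0 < a n"
    and b: "\<And>j. 0 \<le> b j" "\<And>n. J \<le> n \<Longrightarrow> b n \<le> E * a n"
  shows "(\<lambda>n. (\<Sum>j<n. Q ^ (n - j) * b j) / a n) \<longlonglongrightarrow> 0"
proof -
  define V where "V n = (\<Sum>j<n. Q ^ (n - j) * b j)" for n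
  have V_Suc: "V (Suc n) = Q * (V n + b n)" for n
  proof -
    have "(\<Sum>j<n. Q ^ (Suc n - j) * b j) = Q * V n"
      unfolding V_def sum_distrib_left by (intro sum.cong) (auto simp: Suc_diff_le)
    then show ?thesis by (simp add: V_def algebra_simps)
  qed
  have "0 \<le> E * a J" using b(1)[of J] b(2)[of J] by linarith
  then have "0 \<le> E" using pos[of J] by (simp add: zero_le_mult_iff)
  show ?thesis
    unfolding V_def[symmetric]
  proof (rule LIMSEQ_zero_of_recursive_bound[where c = "\<lambda>n. Q * (a n / a (Suc n))" and N = J and E = E])
    show "(\<lambda>n. Q * (a n / a (Suc n))) \<longlonglongrightarrow> 0"
      using tendsto_mult_right_zero[OF ratio] by simp
    show "0 \<le> E" by fact
  next
    fix n assume "J \<le> n"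
    then have an: "0 < a n" "0 < a (Suc n)" using pos by auto
    show "0 \<le> Q * (a n / a (Suc n))" using an \<open>0 \<le> Q\<close> by simp
    show "0 \<le> V n / a n" using an b(1) \<open>0 \<le> Q\<close> by (simp add: V_def sum_nonneg)
    have "V (Suc n) / a (Suc n) = Q * (a n / a (Suc n)) * (V n / a n + b n / a n)"
      using an by (simp add: V_Suc field_simps)
    also have "\<dots> \<le> Q * (a n / a (Suc n)) * (V n / a n + E)"
      using b(2)[OF \<open>J \<le> n\<close>] an \<open>0 \<le> Q\<close>
      by (intro mult_left_mono add_left_mono) (auto simp: divide_le_eq)
    finally show "V (Suc n) / a (Suc n) \<le> Q * (a n / a (Suc n)) * (V n / a n + E)" .
  qed
qed

lemma conv_radius_pos_imp_geometric_bound: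
  fixes f :: "nat \<Rightarrow> real"
  assumes "0 < conv_radius f"
  obtains r C where "0 < r" "\<And>k. \<bar>f k\<bar> \<le> C / r ^ k"
proof -
  obtain r where r: "0 < ereal r" "ereal r < conv_radius f"
    using ereal_dense2[OF assms] by blast
  then have "summable (\<lambda>n. f n * r ^ n)" by (intro summable_in_conv_radius) simp
  then have "(\<lambda>n. f n * r ^ n) \<longlonglongrightarrow> 0" by (rule summable_LIMSEQ_zero)
  then have "Bseq (\<lambda>n. f n * r ^ n)" using convergent_imp_Bseq convergent_def by blast
  then obtain C where C: "\<forall>n. norm (f n * r ^ n) \<le> C" by (metis BseqE)
  have "\<bar>f k\<bar> \<le> C / r ^ k" for k
  proof -
    have "\<bar>f k * r ^ k\<bar> \<le> C" using C by simp
    then show ?thesis using r by (simp add: abs_mult abs_of_pos pos_le_divide_eq)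
  qed
  then show thesis using r that by auto
qed

lemma power_series_tail_le:
  fixes a f :: "nat \<Rightarrow> real"
  assumes a0: "a 0 = 0" and nn: "\<And>i. 0 \<le> a i" and "0 < r" and f: "\<And>k. \<bar>f k\<bar> \<le> C / r ^ k"
  shows "\<bar>\<Sum>k\<in>{2..n}. f k * fps_nth (Abs_fps a ^ k) n\<bar>
    \<le> C / r * (\<Sum>j<n. ((a 1 + 1) / r) ^ (n - j) * conv_majorant a j)"
proof -
  let ?Q = "(a 1 + 1) / r" and ?b = "conv_majorant a"
  have "0 \<le> C" using f[of 0] by simp
  have "\<bar>\<Sum>k\<in>{2..n}. f k * fps_nth (Abs_fps a ^ k) n\<bar> \<le> (\<Sum>k\<in>{2..n}. C / r * (?Q ^ (k - 1) * ?b (n + 1 - k)))"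
  proof (rule order.trans[OF sum_abs sum_mono])
    fix k assume k: "k \<in> {2..n}"
    have P: "0 \<le> fps_nth (Abs_fps a ^ k) n" by (rule fps_nth_power_nonneg[of a, OF nn])
    have "\<bar>f k * fps_nth (Abs_fps a ^ k) n\<bar> = \<bar>f k\<bar> * fps_nth (Abs_fps a ^ k) n"
      using P by (simp add: abs_mult)
    also have "\<dots> \<le> C / r ^ k * fps_nth (Abs_fps a ^ k) n" by (rule mult_right_mono[OF f P])
    also have "\<dots> \<le> C / r ^ k * ((a 1 + 1) ^ (k - 1) * ?b (n + 1 - k))"
      using fps_nth_power_le_majorant[of a, OF a0 nn, of k n] k \<open>0 \<le> C\<close> \<open>0 < r\<close>
      by (intro mult_left_mono) auto
    also have "\<dots> = C / r * (?Q ^ (k - 1) * ?b (n + 1 - k))"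
      using k \<open>0 < r\<close> by (cases k) (simp_all add: power_divide field_simps)
    finally show "\<bar>f k * fps_nth (Abs_fps a ^ k) n\<bar> \<le> C / r * (?Q ^ (k - 1) * ?b (n + 1 - k))" .
  qed
  also have "\<dots> = C / r * (\<Sum>k\<in>{2..n}. ?Q ^ (k - 1) * ?b (n + 1 - k))"
    by (simp add: sum_distrib_left)
  also have "(\<Sum>k\<in>{2..n}. ?Q ^ (k - 1) * ?b (n + 1 - k)) = (\<Sum>j\<in>{1..n-1}. ?Q ^ (n - j) * ?b j)"
    by (rule sum.reindex_bij_witness[where i = "\<lambda>j. n + 1 - j" and j = "\<lambda>k. n + 1 - k"]) auto
  finally have "\<bar>\<Sum>k\<in>{2..n}. f k * fps_nth (Abs_fps a ^ k) n\<bar> \<le> C / r * (\<Sum>j\<in>{1..n-1}. ?Q ^ (n - j) * ?b j)" .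
  moreover have "(\<Sum>j\<in>{1..n-1}. ?Q ^ (n - j) * ?b j) \<le> (\<Sum>j<n. ?Q ^ (n - j) * ?b j)"
    using nn[of 1] \<open>0 < r\<close> conv_majorant_nonneg[of a, OF nn] by (intro sum_mono2) auto
  then have "C / r * (\<Sum>j\<in>{1..n-1}. ?Q ^ (n - j) * ?b j) \<le> C / r * (\<Sum>j<n. ?Q ^ (n - j) * ?b j)"
    using \<open>0 \<le> C\<close> \<open>0 < r\<close> by (intro mult_left_mono) auto
  ultimately show ?thesis by linarith
qed

lemma ratio_tendsto_zero_of_pair_sums:
  fixes a :: "nat \<Rightarrow> real"
  assumes nn: "\<And>i. 0 \<le> a i" and "0 < a 2" and pos: "\<And>n. I \<le> n \<Longrightarrow> 0 < a n"
    and pairs: "(\<lambda>m. \<Sum>i\<in>{2..m-1}. a i * a (m + 1 - i)) \<in> o(a)"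
  shows "(\<lambda>n. a n / a (Suc n)) \<longlonglongrightarrow> 0"
proof (rule tendstoI)
  fix \<eta> :: real assume "0 < \<eta>"
  define S where "S m = (\<Sum>i\<in>{2..m-1}. a i * a (m + 1 - i))" for m
  have "S \<in> o(a)" using pairs by (simp add: S_def[abs_def])
  have Snn: "0 \<le> S m" for m unfolding S_def using nn by (intro sum_nonneg mult_nonneg_nonneg)
  have "\<forall>\<^sub>F m in sequentially. norm (S m) \<le> \<eta> * a 2 / 2 * norm (a m)"
    using landau_o.smallD[OF \<open>S \<in> o(a)\<close>, of "\<eta> * a 2 / 2"] \<open>0 < \<eta>\<close> \<open>0 < a 2\<close> by simp
  then have "\<forall>\<^sub>F m in sequentially. S m \<le> \<eta> * a 2 / 2 * a m"
    by eventually_elim (simp add: Snn nn abs_of_nonneg)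
  then have "\<forall>\<^sub>F n in sequentially. S (n + 1) \<le> \<eta> * a 2 / 2 * a (n + 1)"
    by (subst eventually_sequentially_seg)
  moreover have "\<forall>\<^sub>F n in sequentially. max I 2 \<le> n" by (rule eventually_ge_at_top)
  ultimately show "\<forall>\<^sub>F n in sequentially. dist (a n / a (Suc n)) 0 < \<eta>"
  proof eventually_elim
    case (elim n)
    have "a 2 * a n = a 2 * a (n + 1 + 1 - 2)" by simp
    also have "\<dots> \<le> S (n + 1)"
      unfolding S_def using elim(2) nn
      by (intro member_le_sum[where i = 2 and A = "{2..n+1-1}" and f = "\<lambda>i. a i * a (n + 1 + 1 - i)"])
        (auto intro: mult_nonneg_nonneg)
    also have "\<dots> \<le> a 2 * (\<eta> / 2 * a (Suc n))" using elim(1) by (simp add: mult_ac)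
    finally have "a n \<le> \<eta> / 2 * a (Suc n)" using \<open>0 < a 2\<close> by (rule mult_left_le_imp_le)
    then have "a n / a (Suc n) \<le> \<eta> / 2" using pos[of "Suc n"] elim(2) by (simp add: pos_divide_le_eq)
    then have "a n / a (Suc n) < \<eta>" using \<open>0 < \<eta>\<close> by linarith
    moreover have "0 \<le> a n / a (Suc n)" using nn[of n] nn[of "Suc n"] by simp
    ultimately show ?case by simp
  qed
qed

lemma conv_majorant_eventually_le:
  fixes a :: "nat \<Rightarrow> real"
  assumes nn: "\<And>i. 0 \<le> a i" and pos: "\<And>n. I \<le> n \<Longrightarrow> 0 < a n"
    and ratio: "(\<lambda>n. a n / a (Suc n)) \<longlonglongrightarrow> 0"
    and pairs: "(\<lambda>m. \<Sum>i\<in>{2..m-1}. a i * a (m + 1 - i)) \<in> o(a)"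
  obtains J E where "\<And>m. J \<le> m \<Longrightarrow> 0 < a m" "\<And>m. J \<le> m \<Longrightarrow> conv_majorant a m \<le> E * a m"
proof -
  define S where "S m = (\<Sum>i\<in>{2..m-1}. a i * a (m + 1 - i))" for m
  have Snn: "0 \<le> S m" for m unfolding S_def using nn by (intro sum_nonneg mult_nonneg_nonneg)
  have "\<forall>\<^sub>F m in sequentially. max I 2 \<le> m" by (rule eventually_ge_at_top)
  moreover have "\<forall>\<^sub>F m in sequentially. a m / a (Suc m) < 1"
    using order_tendstoD(2)[OF ratio] by simp
  moreover have "\<forall>\<^sub>F m in sequentially. norm (S m) \<le> 1/2 * norm (a m)"
    using landau_o.smallD[OF pairs, of "1/2"] by (simp add: S_def[abs_def])
  ultimately have "\<forall>\<^sub>F m in sequentially. max I 2 \<le> m \<and> a m / a (Suc m) < 1 \<and> S m \<le> a m / 2"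
    by eventually_elim (simp add: Snn nn abs_of_nonneg)
  then obtain J where J: "\<And>m. J \<le> m \<Longrightarrow> max I 2 \<le> m \<and> a m / a (Suc m) < 1 \<and> S m \<le> a m / 2"
    by (auto simp: eventually_sequentially)
  have posJ: "0 < a m" if "J \<le> m" for m using J[OF that] pos by auto
  have monoJ: "a m \<le> a (Suc m)" if "J \<le> m" for m
    using J[OF that] posJ[of "Suc m"] that by (simp add: divide_less_eq)
  have "2 \<le> J" using J[of J] by simp
  then obtain E where "\<And>m. J \<le> m \<Longrightarrow> conv_majorant a m \<le> E * a m"
    using conv_majorant_le_const_mult[of a, OF nn _ posJ monoJ] J[unfolded S_def] by blast
  with posJ show thesis by (rule that)
qed

lemma power_series_tail_negligible:
  fixes a f :: "nat \<Rightarrow> real"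
  assumes a0: "a 0 = 0" and nn: "\<And>i. 0 \<le> a i" and "0 < a 2" and pos: "\<And>n. I \<le> n \<Longrightarrow> 0 < a n"
    and pairs: "(\<lambda>m. \<Sum>i\<in>{2..m-1}. a i * a (m + 1 - i)) \<in> o(a)"
    and "0 < conv_radius f"
  shows "(\<lambda>n. (\<Sum>k\<in>{2..n}. f k * fps_nth (Abs_fps a ^ k) n) / a n) \<longlonglongrightarrow> 0"
proof -
  have ratio: "(\<lambda>n. a n / a (Suc n)) \<longlonglongrightarrow> 0"
    by (rule ratio_tendsto_zero_of_pair_sums[of a, OF nn \<open>0 < a 2\<close> pos pairs])
  obtain J E where posJ: "\<And>m. J \<le> m \<Longrightarrow> 0 < a m"
    and E: "\<And>m. J \<le> m \<Longrightarrow> conv_majorant a m \<le> E * a m"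
    using conv_majorant_eventually_le[of a, OF nn pos ratio pairs] by blast
  obtain r C where r: "0 < r" "\<And>k. \<bar>f k\<bar> \<le> C / r ^ k"
    using conv_radius_pos_imp_geometric_bound[OF \<open>0 < conv_radius f\<close>] by blast
  define Y where "Y n = (\<Sum>k\<in>{2..n}. f k * fps_nth (Abs_fps a ^ k) n)" for n
  define V where "V n = (\<Sum>j<n. ((a 1 + 1) / r) ^ (n - j) * conv_majorant a j)" for n
  have "(\<lambda>n. V n / a n) \<longlonglongrightarrow> 0"
    unfolding V_def using nn[of 1] r(1)
    by (intro geometric_convolution_negligible[OF _ ratio posJ conv_majorant_nonneg[of a, OF nn] E]) simp
  then have "(\<lambda>n. C / r * (V n / a n)) \<longlonglongrightarrow> 0" by (rule tendsto_mult_right_zero)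
  moreover have "\<forall>\<^sub>F n in sequentially. norm (Y n / a n) \<le> C / r * (V n / a n)"
    unfolding eventually_sequentially
  proof (intro exI allI impI)
    fix n assume "J \<le> n"
    have "\<bar>Y n\<bar> / a n \<le> C / r * V n / a n"
      using power_series_tail_le[of a, OF a0 nn r, of n] posJ[OF \<open>J \<le> n\<close>]
      unfolding Y_def V_def by (intro divide_right_mono) auto
    then show "norm (Y n / a n) \<le> C / r * (V n / a n)" using posJ[OF \<open>J \<le> n\<close>] by simp
  qed
  ultimately show ?thesis unfolding Y_def by (rule Lim_null_comparison[rotated])
qed

lemma pair_sum_le_compositions:
  fixes a :: "nat \<Rightarrow> real"
  assumes nn: "\<And>i. 0 \<le> a i"
  shows "(\<Sum>i\<in>{2..m-1}. a i * a (m + 1 - i)) \<le>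
    (\<Sum>c\<in>{c \<in> {..<2::nat} \<rightarrow>\<^sub>E {1..<m}. (\<Sum>j<2. c j) = Suc m}. \<Prod>j<2. a (c j))"
proof -
  let ?C = "{c \<in> {..<2::nat} \<rightarrow>\<^sub>E {1..<m}. (\<Sum>j<2. c j) = Suc m}"
  define h where "h i = (\<lambda>j\<in>{..<2::nat}. if j = 0 then i else Suc m - i)" for i
  have inj: "inj_on h {2..m-1}"
  proof (rule inj_onI)
    fix x y assume "h x = h y"
    then have "h x 0 = h y 0" by simp
    then show "x = y" by (simp add: h_def)
  qed
  have sub: "h ` {2..m-1} \<subseteq> ?C"
    by (auto simp: h_def PiE_def extensional_def numeral_2_eq_2)
  have fin: "finite ?C"
    by (rule finite_subset[of _ "{..<2::nat} \<rightarrow>\<^sub>E {1..<m}"]) (auto intro: finite_PiE)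
  have "(\<Sum>i\<in>{2..m-1}. a i * a (m + 1 - i)) = (\<Sum>i\<in>{2..m-1}. \<Prod>j<2. a (h i j))"
    by (intro sum.cong refl) (simp add: h_def numeral_2_eq_2)
  also have "\<dots> = (\<Sum>c\<in>h ` {2..m-1}. \<Prod>j<2. a (c j))"
    by (rule sum.reindex[OF inj, symmetric, unfolded comp_def])
  also have "\<dots> \<le> (\<Sum>c\<in>?C. \<Prod>j<2. a (c j))"
    by (rule sum_mono2[OF fin sub]) (simp add: nn prod_nonneg)
  finally show ?thesis .
qed

lemma pair_sums_small_of_compositions_small:
  fixes a :: "nat \<Rightarrow> real"
  assumes nn: "\<And>i. 0 \<le> a i"
    and comp: "(\<lambda>n. \<Sum>c\<in>{c \<in> {..<2::nat} \<rightarrow>\<^sub>E {1..<n - (2 - 1)}. (\<Sum>j<2. c j) = n}. \<Prod>j<2. a (c j))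
      \<in> o(\<lambda>n. a (n - (2 - 1)))"
  shows "(\<lambda>m. \<Sum>i\<in>{2..m-1}. a i * a (m + 1 - i)) \<in> o(a)"
proof (rule landau_o.big_small_trans)
  show "(\<lambda>m. \<Sum>c\<in>{c \<in> {..<2::nat} \<rightarrow>\<^sub>E {1..<m}. (\<Sum>j<2. c j) = Suc m}. \<Prod>j<2. a (c j))
      \<in> o(a)"
    using landau_o.small.compose[OF comp filterlim_Suc] by simp
  have "norm (\<Sum>i\<in>{2..m-1}. a i * a (m + 1 - i))
      \<le> norm (\<Sum>c\<in>{c \<in> {..<2::nat} \<rightarrow>\<^sub>E {1..<m}. (\<Sum>j<2. c j) = Suc m}. \<Prod>j<2. a (c j))" for m
  proof -
    let ?P = "\<Sum>i\<in>{2..m-1}. a i * a (m + 1 - i)"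
    let ?C = "\<Sum>c\<in>{c \<in> {..<2::nat} \<rightarrow>\<^sub>E {1..<m}. (\<Sum>j<2. c j) = Suc m}. \<Prod>j<2. a (c j)"
    have "0 \<le> ?P" using nn by (intro sum_nonneg mult_nonneg_nonneg)
    then have "norm ?P = ?P" by simp
    moreover have "?P \<le> ?C" by (rule pair_sum_le_compositions[of a m, OF nn])
    moreover have "?C \<le> norm ?C" by simp
    ultimately show ?thesis by linarith
  qed
  then show "(\<lambda>m. \<Sum>i\<in>{2..m-1}. a i * a (m + 1 - i))
      \<in> O(\<lambda>m. \<Sum>c\<in>{c \<in> {..<2::nat} \<rightarrow>\<^sub>E {1..<m}. (\<Sum>j<2. c j) = Suc m}. \<Prod>j<2. a (c j))"
    by (intro landau_o.big_mono always_eventually allI)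
qed

lemma LIMSEQ_div_add_negligible:
  fixes x y :: "nat \<Rightarrow> real"
  assumes lim: "(\<lambda>n. y n / x n) \<longlonglongrightarrow> 0" and "c \<noteq> 0" and "\<forall>\<^sub>F n in sequentially. x n \<noteq> 0"
  shows "(\<lambda>n. c * x n / (c * x n + y n)) \<longlonglongrightarrow> 1"
proof -
  have "(\<lambda>n. 1 / (1 + y n / x n / c)) \<longlonglongrightarrow> 1 / (1 + 0 / c)"
    by (rule tendsto_divide[OF tendsto_const tendsto_add[OF tendsto_const tendsto_divide[OF lim tendsto_const]]])
      (use \<open>c \<noteq> 0\<close> in simp_all)
  then have "(\<lambda>n. 1 / (1 + y n / x n / c)) \<longlonglongrightarrow> 1" by simp
  moreover have "\<forall>\<^sub>F n in sequentially. 1 / (1 + y n / x n / c) = c * x n / (c * x n + y n)"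
    using assms(3)
  proof eventually_elim
    case (elim n)
    then have "1 + y n / x n / c = (c * x n + y n) / (c * x n)" using \<open>c \<noteq> 0\<close> by (simp add: field_simps)
    then show ?case by simp
  qed
  ultimately show ?thesis by (rule Lim_transform_eventually)
qed

text \<open>Only the case k = 2 of the growth hypothesis is needed.\<close>
theorem mainTheorem10:
  fixes SF :: "nat set \<Rightarrow> 'b set" and wF :: "nat set \<Rightarrow> 'b \<Rightarrow> real"
    and TF :: "(nat \<Rightarrow> nat) \<Rightarrow> nat set \<Rightarrow> 'b \<Rightarrow> 'b"
    and SG :: "nat set \<Rightarrow> 'c set" and wG :: "nat set \<Rightarrow> 'c \<Rightarrow> real"
    and TG :: "(nat \<Rightarrow> nat) \<Rightarrow> nat set \<Rightarrow> 'c \<Rightarrow> 'c"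
    and a :: "nat \<Rightarrow> real" and d I :: nat
  assumes F: "weighted_species SF wF TF"
    and G: "weighted_species SG wG TG"
    and G_empty: "SG {} = {}"
    and a_def: "\<And>i. a i = egf_coeff SG wG i"
    and G_rad: "conv_radius a = 0"
    and F_rad: "conv_radius (egf_coeff SF wF) > 0"
    and d_pos: "d \<ge> 1"
    and a_zero: "\<And>i. i mod d \<noteq> 1 mod d \<Longrightarrow> a i = 0"
    and a_pos: "\<And>i. i \<ge> I \<Longrightarrow> i mod d = 1 mod d \<Longrightarrow> a i > 0"
    and conv: "\<And>k. k \<ge> 2 \<Longrightarrow>
        (\<lambda>n. \<Sum>c\<in>{c \<in> {..<k} \<rightarrow>\<^sub>E {1..<n - (k - 1)}. (\<Sum>j<k. c j) = n}. \<Prod>j<k. a (c j))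
          \<in> o(\<lambda>n. a (n - (k - 1)))"
    and F1: "egf_coeff SF wF 1 > 0"
    and a1: "a 1 > 0" and a2: "a 2 > 0"
  shows "(\<lambda>n. prob_single_component SF wF SG wG n) \<longlonglongrightarrow> 1"
proof -
  define f where "f = egf_coeff SF wF"
  define Y where "Y n = (\<Sum>k\<in>{2..n}. f k * fps_nth (Abs_fps a ^ k) n)" for n
  have a_eq: "egf_coeff SG wG = a" by (simp add: fun_eq_iff a_def)
  have a0: "a 0 = 0" using G_empty by (simp add: a_def egf_coeff_def total_weight_def)
  have nn: "0 \<le> a i" for i unfolding a_def by (rule egf_coeff_nonneg[OF G])
  have "d = 1"
  proof (rule ccontr)
    assume "d \<noteq> 1"
    then have "2 mod d \<noteq> 1 mod d" using d_pos by (cases "d = 2") auto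
    then show False using a_zero a2 by force
  qed
  then have pos: "0 < a n" if "I \<le> n" for n using a_pos that by simp
  have "(\<lambda>n. Y n / a n) \<longlonglongrightarrow> 0"
    unfolding Y_def f_def
    using power_series_tail_negligible[of a, OF a0 nn a2 pos
        pair_sums_small_of_compositions_small[of a, OF nn conv[OF order_refl]] F_rad] .
  moreover have "f 1 \<noteq> 0" using F1 by (simp add: f_def)
  moreover have "\<forall>\<^sub>F n in sequentially. a n \<noteq> 0"
    using eventually_ge_at_top[of I] by (rule eventually_mono) (use pos in force)
  ultimately have "(\<lambda>n. f 1 * a n / (f 1 * a n + Y n)) \<longlonglongrightarrow> 1" by (rule LIMSEQ_div_add_negligible)
  moreover have "\<forall>\<^sub>F n in sequentially. f 1 * a n / (f 1 * a n + Y n) = prob_single_component SF wF SG wG n"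
    using eventually_ge_at_top[of 1]
    by eventually_elim (simp add: prob_single_component_eq[OF F G G_empty] f_def Y_def a_eq)
  ultimately show ?thesis by (rule Lim_transform_eventually)
qed

end
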